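(* Let $r>0$, $R_0>r$, $V_T>0$ and $\Delta V>0$, and put $V_s=\frac{2\pi R_0V_T}{r}+V_T+\Delta V$. Define a sequence by $R_0$ (the given initial radius) and $$R_{i+1}=R_i-\frac{r(V_s-V_T)-2\pi R_iV_T}{V_s+V_T}\quad(i\ge 0),$$ and put $T_{in_i}=\frac{r(V_s-V_T)-2\pi R_iV_T}{V_s(V_s+V_T)}$. Let $N=\min\{n\ge 0: R_n\le r\}$. Define $$T_{in}=\sum_{i=0}^{N-2}T_{in_i}+\frac{R_N}{V_s},\qquad T_{circular}=\sum_{i=0}^{N-1}\frac{2\pi R_i}{V_s}+\frac{2\pi r}{V_s},$$ and $T=T_{circular}+T_{in}$. Then $$N=\left\lceil\frac{\ln\left(\frac{2\pi rV_T-r(V_s-V_T)}{2\pi R_0V_T-r(V_s-V_T)}\right)}{\ln\left(1+\frac{2\pi V_T}{V_s+V_T}\right)}\right\rceil,$$ $$T_{in}=\frac{R_0}{V_s}+\left(1+\frac{2\pi V_T}{V_s+V_T}\right)^{N-1}\frac{2\pi R_0V_T-r(V_s-V_T)}{V_s(V_s+V_T)},$$ and $$T_{circular}=-\frac{R_0(V_s+V_T)}{V_sV_T}+\frac{r(V_s-V_T)(V_s+V_T+2\pi V_TN)}{2\pi V_sV_T^2}+\left(1+\frac{2\pi V_T}{V_s+V_T}\right)^{N}\frac{2\pi R_0V_T-r(V_s-V_T)}{V_sV_T}\cdot\frac{V_s+V_T}{2\pi V_T}+\frac{2\pi r}{V_s}.$$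
   Context: This models a circular sweep process. Evaders, with maximal speed $V_T$, start in a disk of radius $R_0$. A line formation with sensor length $2r$, moving at speed $V_s=V_c+\Delta V$ with critical speed $V_c=2\pi R_0V_T/r+V_T$, repeatedly circles the evader region and then steps inward. $R_i$ is the radius of the circle bounding the evader region after $i$ sweeps. $T_{in_i}$ is the duration of the $i$-th inward advancement. $N$ is the number of iterations needed to reduce the evader region to a disk of radius at most $r$. $T_{in}$ is the total inward-advancement time, which includes a final inward move of duration $R_N/V_s$. $T_{circular}$ is the total time of the circular traversals, which includes a final circular sweep of radius $r$. *)

theory Defs
  imports Complex_Main
begin

end

theory Submission
  imports Defs
begin

text \<open>The recursion for the radii is affine, \<open>R (i+1) = q R i - (q - 1) R\<^sub>s\<close> with ratio
  \<open>q = 1 + 2\<pi>V\<^sub>T/(V\<^sub>s+V\<^sub>T) > 1\<close> and repelling fixed point \<open>R\<^sub>s = r(V\<^sub>s-V\<^sub>T)/(2\<pi>V\<^sub>T)\<close>,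
  which exceeds \<open>R\<^sub>0\<close> exactly because \<open>V\<^sub>s\<close> is above the critical speed. Hence
  \<open>R n = R\<^sub>s - q\<^sup>n (R\<^sub>s - R\<^sub>0)\<close> decreases geometrically away from \<open>R\<^sub>s\<close>; solving
  \<open>R n \<le> r\<close> for \<open>n\<close> gives \<open>N\<close> as a ceiling of a logarithm, the inward times telescope to
  \<open>(R\<^sub>0 - R (N-1))/V\<^sub>s + R N/V\<^sub>s\<close>, and the circular times are a geometric sum.\<close>

lemma affine_recurrence_closed_form:
  fixes x :: "nat \<Rightarrow> 'a::comm_ring_1"
  assumes "\<And>n. x (Suc n) = q * x n - (q - 1) * s"
  shows "x n = s - q ^ n * (s - x 0)"
proof (induction n)
  case (Suc n)
  have "x (Suc n) = q * (s - q ^ n * (s - x 0)) - (q - 1) * s"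
    using assms Suc.IH by simp
  then show ?case by (simp add: algebra_simps)
qed simp

lemma sum_affine_geometric:
  fixes q :: "'a::field"
  assumes "q \<noteq> 1"
  shows "(\<Sum>i<n. s - q ^ i * a) = of_nat n * s - a * (q ^ n - 1) / (q - 1)"
  using assms by (simp add: sum_subtractf sum_distrib_right[symmetric] geometric_sum)

lemma geometric_escape_le_iff:
  fixes q a s t :: real
  assumes "q > 1" "a > 0" "t < s"
  shows "s - q ^ n * a \<le> t \<longleftrightarrow> ln ((s - t) / a) / ln q \<le> real n"
proof -
  have "s - q ^ n * a \<le> t \<longleftrightarrow> (s - t) / a \<le> q ^ n"
    using assms by (simp add: pos_divide_le_eq algebra_simps)
  also have "\<dots> \<longleftrightarrow> ln ((s - t) / a) \<le> real n * ln q"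
    using assms by (simp add: ln_realpow[symmetric])
  also have "\<dots> \<longleftrightarrow> ln ((s - t) / a) / ln q \<le> real n"
    using assms by (simp add: pos_divide_le_eq)
  finally show ?thesis .
qed

lemma least_geometric_escape:
  fixes q a s t :: real
  assumes "q > 1" "a > 0" "t < s"
  shows "(LEAST n. s - q ^ n * a \<le> t) = nat \<lceil>ln ((s - t) / a) / ln q\<rceil>"
proof (rule Least_equality)
  let ?x = "ln ((s - t) / a) / ln q"
  have "?x \<le> real (nat \<lceil>?x\<rceil>)"
    by linarith
  then show "s - q ^ nat \<lceil>?x\<rceil> * a \<le> t"
    using geometric_escape_le_iff[OF assms] by blast
  show "nat \<lceil>?x\<rceil> \<le> n" if "s - q ^ n * a \<le> t" for n
    using that geometric_escape_le_iff[OF assms] by (simp add: ceiling_le nat_le_iff)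
qed

locale circular_sweep =
  fixes r R0 VT Vs :: real and R :: "nat \<Rightarrow> real"
  assumes r_pos: "0 < r" and r_less_R0: "r < R0" and VT_pos: "0 < VT"
    and above_critical: "2 * pi * R0 * VT < r * (Vs - VT)"
    and R_0: "R 0 = R0"
    and R_Suc: "\<And>i. R (Suc i) = R i - (r * (Vs - VT) - 2 * pi * R i * VT) / (Vs + VT)"
begin

definition ratio :: real where
  "ratio = 1 + 2 * pi * VT / (Vs + VT)"

definition fixpoint :: real where
  "fixpoint = r * (Vs - VT) / (2 * pi * VT)"

lemma VT_less_Vs: "VT < Vs"
proof -
  have "0 < r * (Vs - VT)"
    using above_critical r_pos r_less_R0 VT_pos by (smt (verit) mult_pos_pos pi_gt_zero)
  then show ?thesis
    using r_pos by (simp add: zero_less_mult_iff)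
qed

lemma Vs_pos: "0 < Vs" and Vs_plus_VT_pos: "0 < Vs + VT"
  using VT_less_Vs VT_pos by simp_all

lemma ratio_gt_1: "1 < ratio"
  unfolding ratio_def using Vs_plus_VT_pos VT_pos by simp

lemma ratio_minus_1: "ratio - 1 = 2 * pi * VT / (Vs + VT)"
  unfolding ratio_def by simp

lemma R0_less_fixpoint: "R0 < fixpoint"
  unfolding fixpoint_def using above_critical VT_pos pi_gt_zero by (simp add: field_simps)

lemma fixpoint_scaled: "2 * pi * VT * fixpoint = r * (Vs - VT)"
  unfolding fixpoint_def using VT_pos pi_gt_zero by simp

lemma ratio_drift:
  "(ratio - 1) * (fixpoint - t) = (r * (Vs - VT) - 2 * pi * t * VT) / (Vs + VT)"
proof -
  have "(ratio - 1) * fixpoint = r * (Vs - VT) / (Vs + VT)"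
    unfolding ratio_def fixpoint_def using VT_pos pi_gt_zero by simp
  moreover have "(ratio - 1) * t = 2 * pi * t * VT / (Vs + VT)"
    unfolding ratio_def by simp
  ultimately show ?thesis
    by (simp add: right_diff_distrib diff_divide_distrib)
qed

lemma radius_closed_form: "R n = fixpoint - ratio ^ n * (fixpoint - R0)"
proof (rule affine_recurrence_closed_form[where x = R, unfolded R_0])
  show "R (Suc i) = ratio * R i - (ratio - 1) * fixpoint" for i
    unfolding R_Suc ratio_drift[symmetric] by (simp add: algebra_simps)
qed

lemma iterations:
  "(LEAST n. R n \<le> r)
    = nat \<lceil>ln ((2 * pi * r * VT - r * (Vs - VT)) / (2 * pi * R0 * VT - r * (Vs - VT))) / ln ratio\<rceil>"
proof -
  have "2 * pi * t * VT - r * (Vs - VT) = - (2 * pi * VT) * (fixpoint - t)" for t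
    using fixpoint_scaled by (simp add: algebra_simps)
  then have "(2 * pi * r * VT - r * (Vs - VT)) / (2 * pi * R0 * VT - r * (Vs - VT))
      = (fixpoint - r) / (fixpoint - R0)"
    using VT_pos pi_gt_zero by simp
  then show ?thesis
    unfolding radius_closed_form
    using least_geometric_escape[OF ratio_gt_1] R0_less_fixpoint r_less_R0 by simp
qed

lemma iterations_pos: "0 < (LEAST n. R n \<le> r)"
proof -
  have "1 < (fixpoint - r) / (fixpoint - R0)"
    using R0_less_fixpoint r_less_R0 by simp
  then show ?thesis
    unfolding radius_closed_form
    using least_geometric_escape[OF ratio_gt_1] R0_less_fixpoint r_less_R0 ratio_gt_1
    by (simp add: divide_pos_pos)
qed

lemma inward_time:
  assumes "0 < n"
  shows "(\<Sum>i<n - 1. (r * (Vs - VT) - 2 * pi * R i * VT) / (Vs * (Vs + VT))) + R n / Vs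
    = R0 / Vs + ratio ^ (n - 1) * (2 * pi * R0 * VT - r * (Vs - VT)) / (Vs * (Vs + VT))"
proof -
  obtain m where n: "n = Suc m"
    using assms by (cases n) auto
  have "(r * (Vs - VT) - 2 * pi * R i * VT) / (Vs * (Vs + VT)) = R i / Vs - R (Suc i) / Vs" for i
    unfolding R_Suc by (simp add: divide_divide_eq_left mult.commute diff_divide_distrib)
  then have "(\<Sum>i<m. (r * (Vs - VT) - 2 * pi * R i * VT) / (Vs * (Vs + VT))) + R n / Vs
      = (R0 + (R (Suc m) - R m)) / Vs"
    using sum_lessThan_telescope'[of "\<lambda>j. R j / Vs" m] R_0 n
    by (simp add: add_divide_distrib diff_divide_distrib)
  also have "R (Suc m) - R m = - (ratio ^ m * ((ratio - 1) * (fixpoint - R0)))"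
    unfolding radius_closed_form by (simp add: algebra_simps)
  also have "\<dots> = ratio ^ m * (2 * pi * R0 * VT - r * (Vs - VT)) / (Vs + VT)"
    unfolding ratio_drift
    by (metis minus_diff_eq minus_divide_left mult_minus_right times_divide_eq_right)
  finally show ?thesis
    unfolding n by (simp add: add_divide_distrib divide_divide_eq_left mult.commute)
qed

lemma circular_time:
  "(\<Sum>i<n. 2 * pi * R i / Vs) + 2 * pi * r / Vs
    = - (R0 * (Vs + VT) / (Vs * VT))
      + r * (Vs - VT) * (Vs + VT + 2 * pi * VT * real n) / (2 * pi * Vs * VT ^ 2)
      + ratio ^ n * (2 * pi * R0 * VT - r * (Vs - VT)) / (Vs * VT) * ((Vs + VT) / (2 * pi * VT))
      + 2 * pi * r / Vs"
proof -
  have "(\<Sum>i<n. 2 * pi * R i / Vs)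
      = 2 * pi / Vs * (\<Sum>i<n. fixpoint - ratio ^ i * (fixpoint - R0))"
    unfolding radius_closed_form by (simp add: sum_distrib_left)
  also have "\<dots> = 2 * pi / Vs * (real n * fixpoint - (fixpoint - R0) * (ratio ^ n - 1) / (ratio - 1))"
    using ratio_gt_1 by (simp add: sum_affine_geometric)
  finally have sum_eq: "(\<Sum>i<n. 2 * pi * R i / Vs)
      = 2 * pi / Vs * (real n * fixpoint - (fixpoint - R0) * (ratio ^ n - 1) / (ratio - 1))" .
  show ?thesis
    unfolding sum_eq ratio_minus_1 fixpoint_def
    using Vs_pos Vs_plus_VT_pos VT_pos pi_gt_zero by (simp add: field_simps power2_eq_square)
qed

end

theorem theorem6:
  fixes r R0 VT dV Vs Tin Tcirc :: real
    and R :: "nat \<Rightarrow> real" and Tini :: "nat \<Rightarrow> real" and N :: nat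
  assumes hr: "r > 0" and hR0: "R0 > r" and hVT: "VT > 0" and hdV: "dV > 0"
    and hVs: "Vs = 2 * pi * R0 * VT / r + VT + dV"
    and hR_0: "R 0 = R0"
    and hR_Suc: "\<And>i. R (Suc i) = R i - (r * (Vs - VT) - 2 * pi * R i * VT) / (Vs + VT)"
    and hTini: "\<And>i. Tini i = (r * (Vs - VT) - 2 * pi * R i * VT) / (Vs * (Vs + VT))"
    and hN: "N = (LEAST n. R n \<le> r)"
    and hTin: "Tin = (\<Sum>i<N - 1. Tini i) + R N / Vs"
    and hTcirc: "Tcirc = (\<Sum>i<N. 2 * pi * R i / Vs) + 2 * pi * r / Vs"
  shows "int N = \<lceil>ln ((2 * pi * r * VT - r * (Vs - VT)) / (2 * pi * R0 * VT - r * (Vs - VT)))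
                    / ln (1 + 2 * pi * VT / (Vs + VT))\<rceil>
    \<and> Tin = R0 / Vs + (1 + 2 * pi * VT / (Vs + VT)) ^ (N - 1)
                 * (2 * pi * R0 * VT - r * (Vs - VT)) / (Vs * (Vs + VT))
    \<and> Tcirc = - (R0 * (Vs + VT) / (Vs * VT))
                 + r * (Vs - VT) * (Vs + VT + 2 * pi * VT * real N) / (2 * pi * Vs * VT ^ 2)
                 + (1 + 2 * pi * VT / (Vs + VT)) ^ N * (2 * pi * R0 * VT - r * (Vs - VT)) / (Vs * VT)
                   * ((Vs + VT) / (2 * pi * VT))
                 + 2 * pi * r / Vs"
proof -
  have "2 * pi * R0 * VT < r * (Vs - VT)"
    using hVs hdV hr by (simp add: field_simps)
  then interpret circular_sweep r R0 VT Vs R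
    using hr hR0 hVT hR_0 hR_Suc by unfold_locales
  have N_pos: "0 < N"
    unfolding hN by (rule iterations_pos)
  have "int N = \<lceil>ln ((2 * pi * r * VT - r * (Vs - VT)) / (2 * pi * R0 * VT - r * (Vs - VT)))
      / ln ratio\<rceil>"
    using N_pos iterations unfolding hN by linarith
  moreover have "Tin = R0 / Vs + ratio ^ (N - 1)
      * (2 * pi * R0 * VT - r * (Vs - VT)) / (Vs * (Vs + VT))"
    unfolding hTin hTini using N_pos by (rule inward_time)
  moreover have "Tcirc = - (R0 * (Vs + VT) / (Vs * VT))
      + r * (Vs - VT) * (Vs + VT + 2 * pi * VT * real N) / (2 * pi * Vs * VT ^ 2)
      + ratio ^ N * (2 * pi * R0 * VT - r * (Vs - VT)) / (Vs * VT) * ((Vs + VT) / (2 * pi * VT))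
      + 2 * pi * r / Vs"
    unfolding hTcirc by (rule circular_time)
  ultimately show ?thesis
    unfolding ratio_def by blast
qed

end
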